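(* Fix $s\in\mathbb Z_p^*$ and $k$ with $2^k\le\frac{p-1}{2}$, and let $\Delta=\frac{2^{k+1}}{p-1}$. For $x\in\mathbb Z_p^*$ let $\tilde x=(\hat x,1)/\sqrt2\in\mathbb R^{4^n+1}$ and $y=f_s(x)$. Then: (1) $\|\tilde x\|_2=1$ for all $x\in\mathbb Z_p^*$; (2) there exists $w\in\mathbb R^{4^n+1}$ with $\|w\|_2=1$ such that $\Pr_{x\sim\mathbb Z_p^*}\big[y\langle w,\tilde x\rangle\ge \frac{\Delta}{\sqrt{8+2\Delta^2}}\big]\ge 1-\Delta$ ($x$ uniform); (3) for this same $w$, $|y\langle w,\tilde x\rangle|\le\frac{\Delta}{\sqrt{8+2\Delta^2}}$ for every $x\in\mathbb Z_p^*$; (4) $\langle\tilde x,\tilde x'\rangle=\frac12\big(1+|\langle\phi(x)|\phi(x')\rangle|^2\big)$ for all $x,x'$. Consequently $w^*=\frac{\sqrt{8+2\Delta^2}}{\Delta}w$ satisfies $\Pr_x[y\langle w^*,\tilde x\rangle\ge1]\ge1-\Delta$, $|y\langle w^*,\tilde x\rangle|\le 1$ for all $x$, and $\|w^*\|_2=O(\Delta^{-1})$.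
   Context: Let $p$ be an odd prime, $n=\lceil\log_2 p\rceil$, $g$ a generator of $\mathbb Z_p^*$; $\log_g x$ is the exponent modulo $p-1$ with $g^{\log_g x}\equiv x\pmod p$. For $s\in\mathbb Z_p^*$, $f_s(x)=+1$ if $\log_g x\in\{s,\dots,s+\frac{p-3}{2}\}$ (indices mod $p-1$), else $-1$. Feature state: $|\phi(x)\rangle=2^{-k/2}\sum_{i=0}^{2^k-1}|x\cdot g^i\bmod p\rangle$. For a Hermitian $2^n\times2^n$ matrix $W$, its Pauli vector is $(2^{-n/2}\mathrm{Tr}[\sigma_qW])_{q\in\{0,1,2,3\}^n}\in\mathbb R^{4^n}$, $\sigma_q$ the $n$-qubit Pauli tensor products; $\hat x$ denotes the Pauli vector of $|\phi(x)\rangle\langle\phi(x)|$. *)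

theory Defs
  imports "HOL-Analysis.Analysis" "HOL-Number_Theory.Number_Theory"
begin

definition dlog :: "nat \<Rightarrow> nat \<Rightarrow> nat \<Rightarrow> nat" where
  "dlog p g x = (THE e. e < p - 1 \<and> [g ^ e = x] (mod p))"

definition f_s :: "nat \<Rightarrow> nat \<Rightarrow> nat \<Rightarrow> nat \<Rightarrow> real" where
  "f_s p g s x = (if \<exists>i \<le> (p - 3) div 2. (s + i) mod (p - 1) = dlog p g x then 1 else -1)"

(* amplitude of |phi(x)> = 2^{-k/2} sum_{i<2^k} |x g^i mod p> on basis state |j> *)
definition phi :: "nat \<Rightarrow> nat \<Rightarrow> nat \<Rightarrow> nat \<Rightarrow> nat \<Rightarrow> complex" where
  "phi p g k x j = (\<Sum>i<2^k. if (x * g ^ i) mod p = j then (1::complex) else 0) / complex_of_real (sqrt (2 ^ k))"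

definition braket :: "nat \<Rightarrow> nat \<Rightarrow> nat \<Rightarrow> nat \<Rightarrow> nat \<Rightarrow> nat \<Rightarrow> complex" where
  "braket n p g k x x' = (\<Sum>j<2^n. cnj (phi p g k x j) * phi p g k x' j)"

definition pauli1 :: "nat \<Rightarrow> nat \<Rightarrow> nat \<Rightarrow> complex" where
  "pauli1 q a b =
     (if q = 0 then (if a = b then 1 else 0)
      else if q = 1 then (if a \<noteq> b then 1 else 0)
      else if q = 2 then (if a = 0 \<and> b = 1 then - \<i> else if a = 1 \<and> b = 0 then \<i> else 0)
      else (if a = b then (if a = 0 then 1 else -1) else 0))"

definition bit_of :: "nat \<Rightarrow> nat \<Rightarrow> nat" where
  "bit_of a j = (a div 2 ^ j) mod 2"

(* n-qubit Pauli product sigma_q, q \<in> {0,1,2,3}^n encoded as m < 4^n via base-4 digits *)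
definition pauli_n :: "nat \<Rightarrow> nat \<Rightarrow> nat \<Rightarrow> nat \<Rightarrow> complex" where
  "pauli_n n m a b = (\<Prod>j<n. pauli1 ((m div 4 ^ j) mod 4) (bit_of a j) (bit_of b j))"

definition trace_prod :: "nat \<Rightarrow> (nat \<Rightarrow> nat \<Rightarrow> complex) \<Rightarrow> (nat \<Rightarrow> nat \<Rightarrow> complex) \<Rightarrow> complex" where
  "trace_prod n A W = (\<Sum>a<2^n. \<Sum>b<2^n. A a b * W b a)"

(* Pauli vector of a Hermitian 2^n x 2^n matrix W: coordinates 2^{-n/2} Tr[sigma_q W], q < 4^n
   (real for Hermitian W; we take the real part to land in R^{4^n}) *)
definition pauli_vec :: "nat \<Rightarrow> (nat \<Rightarrow> nat \<Rightarrow> complex) \<Rightarrow> nat \<Rightarrow> real" where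
  "pauli_vec n W m = Re (trace_prod n (pauli_n n m) W) / sqrt (2 ^ n)"

definition rho :: "nat \<Rightarrow> nat \<Rightarrow> nat \<Rightarrow> nat \<Rightarrow> nat \<Rightarrow> nat \<Rightarrow> complex" where
  "rho p g k x a b = phi p g k x a * cnj (phi p g k x b)"

definition xtilde :: "nat \<Rightarrow> nat \<Rightarrow> nat \<Rightarrow> nat \<Rightarrow> nat \<Rightarrow> nat \<Rightarrow> real" where
  "xtilde n p g k x i = (if i < 4 ^ n then pauli_vec n (rho p g k x) i else if i = 4 ^ n then 1 else 0) / sqrt 2"

definition vinner :: "nat \<Rightarrow> (nat \<Rightarrow> real) \<Rightarrow> (nat \<Rightarrow> real) \<Rightarrow> real" where
  "vinner d v u = (\<Sum>i<d. v i * u i)"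

definition vnorm :: "nat \<Rightarrow> (nat \<Rightarrow> real) \<Rightarrow> real" where
  "vnorm d v = sqrt (\<Sum>i<d. (v i)\<^sup>2)"

definition prob_units :: "nat \<Rightarrow> (nat \<Rightarrow> bool) \<Rightarrow> real" where
  "prob_units p P = real (card {x \<in> {1..p - 1}. P x}) / real (p - 1)"

end

theory Submission
  imports Defs
begin

(* Since the Pauli matrices are orthogonal, the Pauli vector is an isometry from Hermitian
   matrices with the Hilbert-Schmidt inner product into R^(4^n).  Hence
   <x^, x'^> = Tr(rho_x rho_x') = |<phi(x)|phi(x')>|^2, which gives (4), and (1) because the window
   x, x g, ..., x g^(2^k - 1) consists of 2^k distinct residues.
   For (2) and (3) take the real symmetric matrix W whose entry at (a, b) is sqrt 2 2^-k f_s(a) when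
   a and b are units with the same label whose discrete logarithms differ cyclically by less than
   2^k, and 0 otherwise.  Then <(W^, 0), x~> = Tr(W rho_x) / sqrt 2 is the average of W over the
   window of x, which has absolute value at most 1 and equals f_s(x) unless the window crosses one
   of the two ends of the arc of positive labels; only 2 * 2^k points x have such a window.  Each
   row of W has at most 2 * 2^k nonzero entries, so the squared norm of W is at most
   4 (p - 1) / 2^k <= (8 + 2 Delta^2) / Delta^2, and the free entry at (0, 0) tops it up exactly. *)

section \<open>Orthogonality of the Pauli basis\<close>

lemma pauli1_cnj: "cnj (pauli1 q a b) = pauli1 q b a"
  by (auto simp: pauli1_def)

lemma pauli1_completeness:
  assumes "a < 2" "b < 2" "c < 2" "d < 2"
  shows "(\<Sum>q<4. pauli1 q a b * cnj (pauli1 q c d)) = (if a = c \<and> b = d then 2 else 0)"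
proof -
  have "a = 0 \<or> a = 1" "b = 0 \<or> b = 1" "c = 0 \<or> c = 1" "d = 0 \<or> d = 1"
    using assms by auto
  then show ?thesis
    by (auto simp: pauli1_def eval_nat_numeral complex_eq_iff)
qed

lemma sum_lessThan_4_mult:
  fixes h :: "nat \<Rightarrow> 'a::comm_monoid_add"
  shows "(\<Sum>m<4 * N. h m) = (\<Sum>m<N. \<Sum>r<4. h (4 * m + r))"
  by (induction N) (simp_all add: eval_nat_numeral add_ac)

lemma sum_prod_base4_digits:
  fixes F :: "nat \<Rightarrow> nat \<Rightarrow> 'a::comm_semiring_1"
  shows "(\<Sum>m<4^n. \<Prod>j<n. F j ((m div 4^j) mod 4)) = (\<Prod>j<n. \<Sum>q<4. F j q)"
proof (induction n arbitrary: F)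
  case 0
  then show ?case by simp
next
  case (Suc n)
  have digit: "((4 * m + r) div (4 * 4^j)) mod 4 = (m div 4^j) mod 4" if "r < 4" for m r j :: nat
  proof -
    have "(4 * m + r) div (4 * 4^j) = ((4 * m + r) div 4) div 4^j"
      by (simp add: div_mult2_eq)
    then show ?thesis
      using that by simp
  qed
  have "(\<Sum>m<4^Suc n. \<Prod>j<Suc n. F j ((m div 4^j) mod 4))
      = (\<Sum>m<4^n. \<Sum>r<4. \<Prod>j<Suc n. F j (((4 * m + r) div 4^j) mod 4))"
    by (simp add: sum_lessThan_4_mult)
  also have "\<dots> = (\<Sum>m<4^n. \<Sum>r<4. F 0 r * (\<Prod>j<n. F (Suc j) ((m div 4^j) mod 4)))"
    by (intro sum.cong refl) (simp only: prod.lessThan_Suc_shift, simp add: digit)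
  also have "\<dots> = (\<Sum>r<4. F 0 r) * (\<Sum>m<4^n. \<Prod>j<n. F (Suc j) ((m div 4^j) mod 4))"
    by (simp add: sum_distrib_left sum_distrib_right)
  also have "\<dots> = (\<Prod>j<Suc n. \<Sum>q<4. F j q)"
    using Suc.IH[of "\<lambda>j. F (Suc j)"] by (simp only: prod.lessThan_Suc_shift)
  finally show ?case .
qed

lemma bit_of_less_2: "bit_of a j < 2"
  by (simp add: bit_of_def)

lemma eq_if_bit_of_eq:
  "a < 2^n \<Longrightarrow> c < 2^n \<Longrightarrow> (\<forall>j<n. bit_of a j = bit_of c j) \<Longrightarrow> a = c"
proof (induction n arbitrary: a c)
  case 0
  then show ?case by simp
next
  case (Suc n)
  have bit_of_Suc: "bit_of x (Suc j) = bit_of (x div 2) j" for x j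
    by (simp add: bit_of_def div_mult2_eq)
  have "a div 2 = c div 2"
    using Suc.prems by (intro Suc.IH) (auto simp: bit_of_Suc)
  moreover have "a mod 2 = c mod 2"
    using Suc.prems(3) by (auto simp: bit_of_def)
  ultimately show ?case
    by (metis div_mult_mod_eq)
qed

lemma pauli_n_cnj: "cnj (pauli_n n m a b) = pauli_n n m b a"
  by (simp add: pauli_n_def cnj_prod pauli1_cnj)

lemma pauli_n_completeness:
  assumes "a < 2^n" "b < 2^n" "c < 2^n" "d < 2^n"
  shows "(\<Sum>m<4^n. pauli_n n m a b * cnj (pauli_n n m c d)) = (if a = c \<and> b = d then 2^n else 0)"
proof -
  let ?match = "\<lambda>j. bit_of a j = bit_of c j \<and> bit_of b j = bit_of d j"
  have "(\<Sum>m<4^n. pauli_n n m a b * cnj (pauli_n n m c d))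
      = (\<Prod>j<n. \<Sum>q<4. pauli1 q (bit_of a j) (bit_of b j) * cnj (pauli1 q (bit_of c j) (bit_of d j)))"
    unfolding pauli_n_def cnj_prod prod.distrib[symmetric]
    by (rule sum_prod_base4_digits[where
          F = "\<lambda>j q. pauli1 q (bit_of a j) (bit_of b j) * cnj (pauli1 q (bit_of c j) (bit_of d j))"])
  also have "\<dots> = (\<Prod>j<n. if ?match j then 2 else 0)"
    by (simp add: pauli1_completeness bit_of_less_2)
  also have "\<dots> = (if a = c \<and> b = d then 2^n else 0)"
  proof (cases "a = c \<and> b = d")
    case True
    then show ?thesis by simp
  next
    case False
    then have "\<exists>j<n. \<not> ?match j"
      using eq_if_bit_of_eq[of a n c] eq_if_bit_of_eq[of b n d] assms by blast
    then show ?thesis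
      using False by (auto intro: prod_zero)
  qed
  finally show ?thesis .
qed

(* Stated as cnj (W a b) = W b a, so that the unfolded definition is a terminating rewrite rule. *)
definition hermitian :: "(nat \<Rightarrow> nat \<Rightarrow> complex) \<Rightarrow> bool" where
  "hermitian W \<longleftrightarrow> (\<forall>a b. cnj (W a b) = W b a)"

lemma Im_trace_prod_pauli_n:
  assumes "hermitian W"
  shows "Im (trace_prod n (pauli_n n m) W) = 0"
proof -
  have "cnj (trace_prod n (pauli_n n m) W) = (\<Sum>a<2^n. \<Sum>b<2^n. pauli_n n m b a * W a b)"
    using assms by (simp add: trace_prod_def pauli_n_cnj hermitian_def)
  also have "\<dots> = trace_prod n (pauli_n n m) W"
    unfolding trace_prod_def by (rule sum.swap)
  finally show ?thesis
    by (simp add: complex_eq_iff)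
qed

lemma sum_nested4_swap_outer:
  "(\<Sum>m\<in>M. \<Sum>a\<in>A. \<Sum>b\<in>B. \<Sum>c\<in>C. \<Sum>d\<in>D. f m a b c d)
     = (\<Sum>a\<in>A. \<Sum>b\<in>B. \<Sum>c\<in>C. \<Sum>d\<in>D. \<Sum>m\<in>M. f m a b c d)"
  by (subst sum.swap, rule sum.cong[OF refl], subst sum.swap, rule sum.cong[OF refl],
      subst sum.swap, rule sum.cong[OF refl], subst sum.swap, rule refl)

lemma sum_sum_delta:
  fixes F :: "'a \<Rightarrow> 'b \<Rightarrow> 'c::comm_monoid_add"
  assumes "finite C" "finite D" "a \<in> C" "b \<in> D"
  shows "(\<Sum>c\<in>C. \<Sum>d\<in>D. if c = a then if d = b then F c d else 0 else 0) = F a b"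
proof -
  have "(\<Sum>c\<in>C. \<Sum>d\<in>D. if c = a then if d = b then F c d else 0 else 0)
      = (\<Sum>c\<in>C. if c = a then (\<Sum>d\<in>D. if d = b then F c d else 0) else 0)"
    by (intro sum.cong) auto
  then show ?thesis
    using assms by (simp add: sum.delta)
qed

lemma pauli_vec_inner:
  assumes "hermitian B"
  shows "(\<Sum>m<4^n. pauli_vec n A m * pauli_vec n B m) = (\<Sum>a<2^n. \<Sum>b<2^n. Re (A a b * cnj (B a b)))"
proof -
  define T where "T W m = trace_prod n (pauli_n n m) W" for W m
  have expand: "T A m * cnj (T B m) = (\<Sum>a<2^n. \<Sum>b<2^n. \<Sum>c<2^n. \<Sum>d<2^n.
      (pauli_n n m a b * A b a) * (cnj (pauli_n n m c d) * cnj (B d c)))" for m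
    unfolding T_def trace_prod_def cnj_sum complex_cnj_mult
    by (simp only: sum_distrib_right) (simp only: sum_distrib_left)
  have completeness: "(\<Sum>m<4^n. (pauli_n n m a b * A b a) * (cnj (pauli_n n m c d) * cnj (B d c)))
      = (if c = a then if d = b then 2^n * (A b a * cnj (B d c)) else 0 else 0)"
    if "a < 2^n" "b < 2^n" "c < 2^n" "d < 2^n" for a b c d
  proof -
    have "(\<Sum>m<4^n. (pauli_n n m a b * A b a) * (cnj (pauli_n n m c d) * cnj (B d c)))
        = (\<Sum>m<4^n. pauli_n n m a b * cnj (pauli_n n m c d)) * (A b a * cnj (B d c))"
      unfolding sum_distrib_right by (intro sum.cong refl) (simp add: mult_ac)
    then show ?thesis
      using that by (auto simp: pauli_n_completeness)
  qed
  have "(\<Sum>m<4^n. T A m * cnj (T B m))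
      = (\<Sum>a<2^n. \<Sum>b<2^n. \<Sum>c<2^n. \<Sum>d<2^n.
           if c = a then if d = b then 2^n * (A b a * cnj (B d c)) else 0 else 0)"
    unfolding expand by (subst sum_nested4_swap_outer) (intro sum.cong refl completeness; simp)
  also have "\<dots> = (\<Sum>a<2^n. \<Sum>b<2^n. 2^n * (A b a * cnj (B b a)))"
    by (intro sum.cong refl sum_sum_delta) auto
  also have "\<dots> = 2^n * (\<Sum>a<2^n. \<Sum>b<2^n. A a b * cnj (B a b))"
    by (subst sum.swap) (simp add: sum_distrib_left)
  finally have sum_T: "(\<Sum>m<4^n. T A m * cnj (T B m)) = 2^n * (\<Sum>a<2^n. \<Sum>b<2^n. A a b * cnj (B a b))" .
  have "pauli_vec n A m * pauli_vec n B m = Re (T A m * cnj (T B m)) / 2^n" for m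
    using Im_trace_prod_pauli_n[OF assms, of n m]
    by (simp add: pauli_vec_def T_def power2_eq_square[symmetric])
  then have "(\<Sum>m<4^n. pauli_vec n A m * pauli_vec n B m) = Re (\<Sum>m<4^n. T A m * cnj (T B m)) / 2^n"
    by (simp add: sum_divide_distrib Re_sum)
  then show ?thesis
    by (simp add: sum_T Re_sum)
qed

section \<open>Real amplitudes of the feature states\<close>

definition phi_amp :: "nat \<Rightarrow> nat \<Rightarrow> nat \<Rightarrow> nat \<Rightarrow> nat \<Rightarrow> real" where
  "phi_amp p g k x j = (\<Sum>i<2^k. if (x * g ^ i) mod p = j then 1 else 0) / sqrt (2 ^ k)"

lemma phi_eq_of_real_amp: "phi p g k x j = complex_of_real (phi_amp p g k x j)"
  by (simp add: phi_def phi_amp_def of_real_sum if_distrib cong: if_cong)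

lemma rho_eq_of_real_amp: "rho p g k x a b = complex_of_real (phi_amp p g k x a * phi_amp p g k x b)"
  by (simp add: rho_def phi_eq_of_real_amp)

lemma hermitian_rho: "hermitian (rho p g k x)"
  by (simp add: hermitian_def rho_eq_of_real_amp)

lemma braket_eq_of_real_amp:
  "braket n p g k x x' = complex_of_real (\<Sum>j<2^n. phi_amp p g k x j * phi_amp p g k x' j)"
  by (simp add: braket_def phi_eq_of_real_amp of_real_sum)

lemma sum_mult_fibre_count:
  fixes h :: "'a \<Rightarrow> 'b::comm_semiring_1"
  assumes "finite A" "finite I" "u ` I \<subseteq> A"
  shows "(\<Sum>a\<in>A. h a * (\<Sum>i\<in>I. if u i = a then 1 else 0)) = (\<Sum>i\<in>I. h (u i))"
proof -
  have "(\<Sum>a\<in>A. h a * (\<Sum>i\<in>I. if u i = a then 1 else 0))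
      = (\<Sum>i\<in>I. \<Sum>a\<in>A. if u i = a then h a else 0)"
    by (simp add: sum_distrib_left if_distrib[of "\<lambda>z. h _ * z"] cong: if_cong) (rule sum.swap)
  also have "\<dots> = (\<Sum>i\<in>I. h (u i))"
    using assms by (intro sum.cong refl) (auto simp: sum.delta')
  finally show ?thesis .
qed

lemma bilinear_form_phi_amp:
  assumes "0 < p" "p \<le> 2 ^ n"
  shows "(\<Sum>a<2^n. \<Sum>b<2^n. h a b * (phi_amp p g k x a * phi_amp p g k x' b))
       = (\<Sum>i<2^k. \<Sum>j<2^k. h ((x * g ^ i) mod p) ((x' * g ^ j) mod p)) / 2 ^ k"
proof -
  define cnt where "cnt y a = (\<Sum>i<2^k. if (y * g ^ i) mod p = a then 1 else (0::real))" for y a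
  have window: "(\<lambda>i. (y * g ^ i) mod p) ` {..<2^k} \<subseteq> {..<2^n}" for y
    using assms by (auto intro: order_less_le_trans[OF mod_less_divisor])
  have "h a b * (phi_amp p g k x a * phi_amp p g k x' b) = (h a b * cnt x' b) * cnt x a / 2^k" for a b
    by (simp add: phi_amp_def cnt_def)
  then have "(\<Sum>a<2^n. \<Sum>b<2^n. h a b * (phi_amp p g k x a * phi_amp p g k x' b))
      = (\<Sum>a<2^n. (\<Sum>b<2^n. h a b * cnt x' b) * cnt x a) / 2^k"
    by (simp only: sum_divide_distrib[symmetric] sum_distrib_right[symmetric])
  also have "\<dots> = (\<Sum>a<2^n. (\<Sum>j<2^k. h a ((x' * g ^ j) mod p)) * cnt x a) / 2^k"
    unfolding cnt_def using window by (simp add: sum_mult_fibre_count)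
  also have "\<dots> = (\<Sum>i<2^k. \<Sum>j<2^k. h ((x * g ^ i) mod p) ((x' * g ^ j) mod p)) / 2 ^ k"
    unfolding cnt_def using window by (simp add: sum_mult_fibre_count)
  finally show ?thesis .
qed

lemma vinner_xtilde:
  "vinner (4 ^ n + 1) (xtilde n p g k x) (xtilde n p g k x')
     = ((\<Sum>m<4^n. pauli_vec n (rho p g k x) m * pauli_vec n (rho p g k x') m) + 1) / 2"
  by (simp add: vinner_def xtilde_def sum_divide_distrib add_divide_distrib)

lemma pauli_vec_rho_inner:
  "(\<Sum>m<4^n. pauli_vec n (rho p g k x) m * pauli_vec n (rho p g k x') m)
     = (\<Sum>j<2^n. phi_amp p g k x j * phi_amp p g k x' j)\<^sup>2"
proof -
  have "(\<Sum>m<4^n. pauli_vec n (rho p g k x) m * pauli_vec n (rho p g k x') m)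
      = (\<Sum>a<2^n. \<Sum>b<2^n. (phi_amp p g k x a * phi_amp p g k x' a) * (phi_amp p g k x b * phi_amp p g k x' b))"
    by (simp add: pauli_vec_inner hermitian_rho rho_eq_of_real_amp mult_ac)
  also have "\<dots> = (\<Sum>j<2^n. phi_amp p g k x j * phi_amp p g k x' j)\<^sup>2"
    by (simp add: power2_eq_square sum_product)
  finally show ?thesis .
qed

lemma vinner_xtilde_braket:
  "vinner (4 ^ n + 1) (xtilde n p g k x) (xtilde n p g k x') = (1 + (cmod (braket n p g k x x'))\<^sup>2) / 2"
  unfolding vinner_xtilde pauli_vec_rho_inner braket_eq_of_real_amp norm_of_real
  by (simp add: power2_abs)

section \<open>The weight matrix\<close>

lemma f_s_cases: "f_s p g s x = 1 \<or> f_s p g s x = -1"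
  by (simp add: f_s_def)

lemma abs_f_s: "\<bar>f_s p g s x\<bar> = 1"
  using f_s_cases[of p g s x] by auto

lemma f_s_mult_self: "f_s p g s x * f_s p g s x = 1"
  using f_s_cases[of p g s x] by auto

definition dlog_close :: "nat \<Rightarrow> nat \<Rightarrow> nat \<Rightarrow> nat \<Rightarrow> nat \<Rightarrow> bool" where
  "dlog_close p g k a b \<longleftrightarrow>
     (\<exists>d<2^k. (dlog p g a + d) mod (p - 1) = dlog p g b \<or> (dlog p g b + d) mod (p - 1) = dlog p g a)"

definition weight_kernel :: "nat \<Rightarrow> nat \<Rightarrow> nat \<Rightarrow> nat \<Rightarrow> nat \<Rightarrow> nat \<Rightarrow> real" where
  "weight_kernel p g s k a b =
     (if a \<in> {1..p - 1} \<and> b \<in> {1..p - 1} \<and> dlog_close p g k a b \<and> f_s p g s a = f_s p g s b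
      then sqrt 2 / 2 ^ k * f_s p g s a else 0)"

text \<open>No feature state has weight on the basis state \<open>|0\<rangle>\<close>, so the entry \<open>t\<close> at \<open>(0, 0)\<close>
  does not change any margin; it only serves to adjust the norm of the weight vector.\<close>

definition weight_matrix :: "nat \<Rightarrow> nat \<Rightarrow> nat \<Rightarrow> nat \<Rightarrow> real \<Rightarrow> nat \<Rightarrow> nat \<Rightarrow> complex" where
  "weight_matrix p g s k t a b =
     complex_of_real ((if a = 0 \<and> b = 0 then t else 0) + weight_kernel p g s k a b)"

definition weight_vec :: "nat \<Rightarrow> nat \<Rightarrow> nat \<Rightarrow> nat \<Rightarrow> nat \<Rightarrow> real \<Rightarrow> nat \<Rightarrow> real" where
  "weight_vec n p g s k t i = (if i < 4 ^ n then pauli_vec n (weight_matrix p g s k t) i else 0)"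

lemma dlog_close_sym: "dlog_close p g k a b = dlog_close p g k b a"
  unfolding dlog_close_def by blast

lemma weight_kernel_sym: "weight_kernel p g s k a b = weight_kernel p g s k b a"
  unfolding weight_kernel_def using dlog_close_sym[of p g k a b] by auto

lemma hermitian_weight_matrix: "hermitian (weight_matrix p g s k t)"
  unfolding hermitian_def weight_matrix_def using weight_kernel_sym by auto

lemma abs_weight_kernel_le: "\<bar>weight_kernel p g s k a b\<bar> \<le> sqrt 2 / 2 ^ k"
  by (simp add: weight_kernel_def abs_mult abs_f_s)

lemma vnorm_weight_vec:
  "vnorm (4 ^ n + 1) (weight_vec n p g s k t)
     = sqrt (t\<^sup>2 + (\<Sum>a<2^n. \<Sum>b<2^n. (weight_kernel p g s k a b)\<^sup>2))"
proof -
  let ?M = "\<lambda>a b. (if a = 0 \<and> b = 0 then t else 0) + weight_kernel p g s k a b"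
  have "(\<Sum>i<4 ^ n + 1. (weight_vec n p g s k t i)\<^sup>2)
      = (\<Sum>m<4 ^ n. pauli_vec n (weight_matrix p g s k t) m * pauli_vec n (weight_matrix p g s k t) m)"
    by (simp add: weight_vec_def power2_eq_square)
  also have "\<dots> = (\<Sum>a<2^n. \<Sum>b<2^n. (?M a b)\<^sup>2)"
    by (simp add: pauli_vec_inner hermitian_weight_matrix weight_matrix_def power2_eq_square)
  also have "\<dots> = (\<Sum>a<(2::nat)^n. \<Sum>b<(2::nat)^n. (if a = 0 then if b = 0 then t\<^sup>2 else 0 else 0))
                 + (\<Sum>a<2^n. \<Sum>b<(2::nat)^n. (weight_kernel p g s k a b)\<^sup>2)"
  proof -
    have "(?M a b)\<^sup>2 = (if a = 0 then if b = 0 then t\<^sup>2 else 0 else 0) + (weight_kernel p g s k a b)\<^sup>2"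
      for a b
      by (cases "a = 0 \<and> b = 0") (auto simp: weight_kernel_def)
    then show ?thesis
      by (simp only: sum.distrib)
  qed
  also have "\<dots> = t\<^sup>2 + (\<Sum>a<2^n. \<Sum>b<2^n. (weight_kernel p g s k a b)\<^sup>2)"
    by (subst sum_sum_delta) auto
  finally show ?thesis
    by (simp add: vnorm_def)
qed

definition cyc_offset :: "nat \<Rightarrow> nat \<Rightarrow> nat \<Rightarrow> nat \<Rightarrow> int" where
  "cyc_offset p g s x = (int (dlog p g x) - int s) mod int (p - 1)"

lemma mem_cyclic_interval_iff:
  fixes s t N h :: nat
  assumes "t < N" "h \<le> N"
  shows "(\<exists>i<h. (s + i) mod N = t) \<longleftrightarrow> (int t - int s) mod int N < int h"
proof
  assume "\<exists>i<h. (s + i) mod N = t"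
  then obtain i where i: "i < h" "(s + i) mod N = t"
    by blast
  then have "(int t - int s) mod int N = int i mod int N"
    by (metis mod_diff_left_eq of_nat_add zmod_int add_diff_cancel_left')
  also have "\<dots> = int i"
    using i(1) assms(2) by simp
  finally show "(int t - int s) mod int N < int h"
    using i(1) by simp
next
  define r where "r = (int t - int s) mod int N"
  assume "r < int h"
  moreover have "0 \<le> r"
    using assms(1) by (simp add: r_def)
  moreover have "(s + nat r) mod N = t"
  proof -
    have "int ((s + nat r) mod N) = (int s + r) mod int N"
      using \<open>0 \<le> r\<close> by (simp add: zmod_int)
    also have "\<dots> = int t"
      using assms(1) by (simp add: r_def mod_add_right_eq)
    finally show ?thesis
      by simp
  qed
  ultimately show "\<exists>i<h. (s + i) mod N = t"
    by (intro exI[of _ "nat r"]) auto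
qed

lemma shift_stays_in_half:
  fixes r i K h :: int
  assumes "0 \<le> r" "r < 2 * h" "0 \<le> i" "i < K" "K \<le> h"
    and "r \<notin> {h - K + 1 ..< h} \<union> {2 * h - K + 1 ..< 2 * h}"
  shows "(r + i) mod (2 * h) = r + i" and "r + i < h \<longleftrightarrow> r < h"
proof -
  have "r + i < 2 * h"
    using assms by auto
  then show "(r + i) mod (2 * h) = r + i"
    using assms by simp
  show "r + i < h \<longleftrightarrow> r < h"
    using assms by auto
qed

lemma sum_if_const: "finite B \<Longrightarrow> (\<Sum>b\<in>B. if P b then c else 0) = of_nat (card {b \<in> B. P b}) * c"
  by (simp add: sum.inter_filter[symmetric])

lemma prob_units_ge:
  assumes "p > 1" "\<forall>x\<in>{1..p - 1}. \<not> Q x \<longrightarrow> P x" "card {x \<in> {1..p - 1}. Q x} \<le> B"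
  shows "prob_units p P \<ge> 1 - real B / real (p - 1)"
proof -
  define N where "N = real (p - 1)"
  have "{1..p - 1} - {x \<in> {1..p - 1}. Q x} \<subseteq> {x \<in> {1..p - 1}. P x}"
    using assms(2) by auto
  then have "card ({1..p - 1} - {x \<in> {1..p - 1}. Q x}) \<le> card {x \<in> {1..p - 1}. P x}"
    by (intro card_mono) auto
  moreover have "card ({1..p - 1} - {x \<in> {1..p - 1}. Q x}) = (p - 1) - card {x \<in> {1..p - 1}. Q x}"
    by (subst card_Diff_subset) auto
  ultimately have "N - real B \<le> real (card {x \<in> {1..p - 1}. P x})"
    using assms(3) unfolding N_def by linarith
  moreover have "0 < N"
    using assms(1) by (simp add: N_def)
  ultimately have "(N - real B) / N \<le> real (card {x \<in> {1..p - 1}. P x}) / N"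
    by (intro divide_right_mono) auto
  also have "(N - real B) / N = 1 - real B / N"
    using \<open>0 < N\<close> by (simp add: diff_divide_distrib)
  finally show ?thesis
    by (simp add: prob_units_def N_def)
qed

section \<open>Windows in the cyclic group\<close>

locale primroot_mod =
  fixes p g :: nat
  assumes prime_p: "prime p" and primroot: "residue_primroot p g"
begin

lemma p_gt_1: "p > 1"
  using prime_p prime_gt_1_nat by blast

lemma coprime_p_g: "coprime p g"
  using primroot by (simp add: residue_primroot_def)

lemma ord_g: "ord p g = p - 1"
  using primroot prime_p by (simp add: residue_primroot_def totient_prime)

lemma bij_betw_pow_mod: "bij_betw (\<lambda>i. g ^ i mod p) {..<p - 1} {1..p - 1}"
proof -
  have "{0<..<p} = {1..p - 1}"
    using p_gt_1 by auto
  then show ?thesis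
    using residue_primroot_is_generator[OF p_gt_1 primroot] prime_p
    by (simp add: totatives_prime totient_prime)
qed

lemma dlog_eqI:
  assumes "e < p - 1" "g ^ e mod p = x"
  shows "dlog p g x = e"
  unfolding dlog_def
proof (rule the_equality)
  have "x < p"
    using assms(2) p_gt_1 by auto
  then show "e < p - 1 \<and> [g ^ e = x] (mod p)"
    using assms by (simp add: cong_def)
  fix e' assume "e' < p - 1 \<and> [g ^ e' = x] (mod p)"
  with \<open>x < p\<close> show "e' = e"
    using assms bij_betw_imp_inj_on[OF bij_betw_pow_mod] by (auto simp: cong_def dest: inj_onD)
qed

lemma dlog_less_and_pow_dlog:
  assumes "x \<in> {1..p - 1}"
  shows "dlog p g x < p - 1" "g ^ dlog p g x mod p = x"
proof -
  have "x \<in> (\<lambda>i. g ^ i mod p) ` {..<p - 1}"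
    using bij_betw_imp_surj_on[OF bij_betw_pow_mod] assms by simp
  then obtain e where "e < p - 1" "g ^ e mod p = x"
    by auto
  then show "dlog p g x < p - 1" "g ^ dlog p g x mod p = x"
    using dlog_eqI by auto
qed

lemma inj_on_dlog: "inj_on (dlog p g) {1..p - 1}"
  by (metis dlog_less_and_pow_dlog(2) inj_onI)

lemma window_in_units:
  assumes "x \<in> {1..p - 1}"
  shows "(x * g ^ i) mod p \<in> {1..p - 1}"
proof -
  have "\<not> p dvd x"
    using assms dvd_imp_le[of p x] by auto
  moreover have "\<not> p dvd g ^ i"
    using coprime_p_g prime_p coprime_absorb_left[of p "g ^ i"] not_prime_unit by auto
  ultimately have "\<not> p dvd x * g ^ i"
    using prime_p by (simp add: prime_dvd_mult_iff)
  then have "(x * g ^ i) mod p \<noteq> 0"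
    by (simp add: dvd_eq_mod_eq_0)
  moreover have "(x * g ^ i) mod p < p"
    using p_gt_1 by simp
  ultimately show ?thesis
    by auto
qed

lemma dlog_window:
  assumes "x \<in> {1..p - 1}"
  shows "dlog p g ((x * g ^ i) mod p) = (dlog p g x + i) mod (p - 1)"
proof (rule dlog_eqI)
  let ?l = "dlog p g x"
  show "(?l + i) mod (p - 1) < p - 1"
    using p_gt_1 by simp
  have "g ^ ((?l + i) mod (p - 1)) mod p = g ^ (?l + i) mod p"
    using order_divides_expdiff[OF coprime_p_g] ord_g by (simp add: cong_def)
  also have "\<dots> = ((g ^ ?l mod p) * g ^ i) mod p"
    by (simp add: power_add mod_mult_left_eq)
  finally show "g ^ ((?l + i) mod (p - 1)) mod p = (x * g ^ i) mod p"
    using dlog_less_and_pow_dlog(2)[OF assms] by simp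
qed

lemma window_inj:
  assumes "x \<in> {1..p - 1}" "i < p - 1" "j < p - 1" "(x * g ^ i) mod p = (x * g ^ j) mod p"
  shows "i = j"
proof -
  have "[dlog p g x + i = dlog p g x + j] (mod (p - 1))"
    using dlog_window[OF assms(1), of i] dlog_window[OF assms(1), of j] assms(4)
    by (simp add: cong_def)
  then have "[i = j] (mod (p - 1))"
    by (simp add: cong_add_lcancel_nat)
  then show ?thesis
    using assms(2,3) by (simp add: cong_def)
qed

lemma sum_phi_amp_sq:
  assumes "x \<in> {1..p - 1}" "2 ^ k \<le> p - 1" "p \<le> 2 ^ n"
  shows "(\<Sum>j<2^n. phi_amp p g k x j * phi_amp p g k x j) = 1"
proof -
  have diagonal: "(\<Sum>j<2^k. if (x * g ^ i) mod p = (x * g ^ j) mod p then 1 else 0) = (1::real)"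
    if "i < 2^k" for i
  proof -
    have "(\<Sum>j<2^k. if (x * g ^ i) mod p = (x * g ^ j) mod p then 1 else (0::real))
        = (\<Sum>j<2^k. if i = j then 1 else 0)"
      using that assms(2) window_inj[OF assms(1), of i] by (intro sum.cong refl) auto
    then show ?thesis
      using that by simp
  qed
  have "(\<Sum>j<2^n. phi_amp p g k x j * phi_amp p g k x j)
      = (\<Sum>a<2^n. \<Sum>b<2^n. (if a = b then 1 else 0) * (phi_amp p g k x a * phi_amp p g k x b))"
    by (simp add: if_distrib[of "\<lambda>z. z * _"] sum.delta cong: if_cong)
  also have "\<dots> = (\<Sum>i<2^k. \<Sum>j<2^k. if (x * g ^ i) mod p = (x * g ^ j) mod p then 1 else 0) / 2 ^ k"
    using p_gt_1 assms(3) by (subst bilinear_form_phi_amp) auto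
  also have "\<dots> = 1"
    by (simp add: diagonal)
  finally show ?thesis .
qed

lemma vnorm_xtilde:
  assumes "x \<in> {1..p - 1}" "2 ^ k \<le> p - 1" "p \<le> 2 ^ n"
  shows "vnorm (4 ^ n + 1) (xtilde n p g k x) = 1"
proof -
  have "(\<Sum>i<4 ^ n + 1. (xtilde n p g k x i)\<^sup>2) = vinner (4 ^ n + 1) (xtilde n p g k x) (xtilde n p g k x)"
    by (simp add: vinner_def power2_eq_square)
  also have "\<dots> = 1"
    unfolding vinner_xtilde_braket braket_eq_of_real_amp sum_phi_amp_sq[OF assms] by simp
  finally show ?thesis
    by (simp add: vnorm_def)
qed

lemma vinner_weight_vec_xtilde:
  assumes "x \<in> {1..p - 1}" "p \<le> 2 ^ n"
  shows "vinner (4 ^ n + 1) (weight_vec n p g s k t) (xtilde n p g k x)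
       = (\<Sum>i<2^k. \<Sum>j<2^k. weight_kernel p g s k ((x * g ^ i) mod p) ((x * g ^ j) mod p)) / 2 ^ k / sqrt 2"
proof -
  have no_zero: "(x * g ^ i) mod p \<noteq> 0" for i
    using window_in_units[OF assms(1), of i] by auto
  have "vinner (4 ^ n + 1) (weight_vec n p g s k t) (xtilde n p g k x)
      = (\<Sum>m<4 ^ n. pauli_vec n (weight_matrix p g s k t) m * pauli_vec n (rho p g k x) m) / sqrt 2"
    unfolding sum_divide_distrib by (simp add: vinner_def weight_vec_def xtilde_def)
  also have "(\<Sum>m<4 ^ n. pauli_vec n (weight_matrix p g s k t) m * pauli_vec n (rho p g k x) m)
      = (\<Sum>a<2^n. \<Sum>b<2^n. ((if a = 0 \<and> b = 0 then t else 0) + weight_kernel p g s k a b)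
                              * (phi_amp p g k x a * phi_amp p g k x b))"
    by (simp add: pauli_vec_inner hermitian_rho weight_matrix_def rho_eq_of_real_amp)
  also have "\<dots> = (\<Sum>i<2^k. \<Sum>j<2^k. weight_kernel p g s k ((x * g ^ i) mod p) ((x * g ^ j) mod p)) / 2 ^ k"
    using p_gt_1 assms(2) by (subst bilinear_form_phi_amp) (auto simp: no_zero)
  finally show ?thesis .
qed

lemma dlog_close_window:
  assumes "x \<in> {1..p - 1}" "i < 2 ^ k" "j < 2 ^ k"
  shows "dlog_close p g k ((x * g ^ i) mod p) ((x * g ^ j) mod p)"
proof -
  let ?l = "dlog p g x"
  have shift: "((?l + i) mod (p - 1) + (j - i)) mod (p - 1) = (?l + j) mod (p - 1)" if "i \<le> j" for i j
  proof -
    have "((?l + i) mod (p - 1) + (j - i)) mod (p - 1) = (?l + i + (j - i)) mod (p - 1)"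
      by (rule mod_add_left_eq)
    then show ?thesis
      using that by simp
  qed
  have "j - i < 2 ^ k" "i - j < 2 ^ k"
    using assms(2,3) by auto
  then show ?thesis
    unfolding dlog_close_def dlog_window[OF assms(1)]
    using shift[of i j] shift[of j i] nat_le_linear[of i j] by blast
qed

lemma vinner_weight_vec_homogeneous:
  assumes "x \<in> {1..p - 1}" "p \<le> 2 ^ n"
    and homogeneous: "\<forall>i<2^k. f_s p g s ((x * g ^ i) mod p) = f_s p g s x"
  shows "vinner (4 ^ n + 1) (weight_vec n p g s k t) (xtilde n p g k x) = f_s p g s x"
proof -
  have "weight_kernel p g s k ((x * g ^ i) mod p) ((x * g ^ j) mod p) = sqrt 2 / 2 ^ k * f_s p g s x"
    if "i < 2^k" "j < 2^k" for i j
    using that homogeneous window_in_units[OF assms(1)] dlog_close_window[OF assms(1) that]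
    by (simp add: weight_kernel_def)
  then show ?thesis
    unfolding vinner_weight_vec_xtilde[OF assms(1,2)] by simp
qed

lemma abs_vinner_weight_vec_le_1:
  assumes "x \<in> {1..p - 1}" "p \<le> 2 ^ n"
  shows "\<bar>vinner (4 ^ n + 1) (weight_vec n p g s k t) (xtilde n p g k x)\<bar> \<le> 1"
proof -
  have "\<bar>\<Sum>i<(2::nat)^k. \<Sum>j<(2::nat)^k. weight_kernel p g s k ((x * g ^ i) mod p) ((x * g ^ j) mod p)\<bar>
      \<le> (\<Sum>i<(2::nat)^k. \<Sum>j<(2::nat)^k. sqrt 2 / 2 ^ k)"
    by (intro order_trans[OF sum_abs] sum_mono abs_weight_kernel_le)
  also have "\<dots> = 2 ^ k * sqrt 2"
    by (simp add: power2_eq_square)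
  finally show ?thesis
    unfolding vinner_weight_vec_xtilde[OF assms] by (simp add: abs_div divide_le_eq field_simps)
qed

lemma card_dlog_close_le:
  assumes "a \<in> {1..p - 1}" "2 ^ k \<le> p - 1"
  shows "card {b \<in> {1..p - 1}. dlog_close p g k a b} \<le> 2 * 2 ^ k"
proof -
  define N where "N = p - 1"
  define l where "l = dlog p g a"
  define E where "E = (\<lambda>d. (l + d) mod N) ` {..<2^k} \<union> (\<lambda>d. (l + (N - d)) mod N) ` {..<2^k}"
  have "dlog p g ` {b \<in> {1..p - 1}. dlog_close p g k a b} \<subseteq> E"
  proof
    fix e assume "e \<in> dlog p g ` {b \<in> {1..p - 1}. dlog_close p g k a b}"
    then obtain b d where b: "b \<in> {1..p - 1}" "e = dlog p g b" "d < 2^k"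
      and "(l + d) mod N = e \<or> (e + d) mod N = l"
      unfolding dlog_close_def l_def N_def by blast
    moreover have "(l + (N - d)) mod N = e" if "(e + d) mod N = l"
    proof -
      have "(l + (N - d)) mod N = (e + d + (N - d)) mod N"
        using that by (metis mod_add_left_eq)
      also have "e + d + (N - d) = e + N"
        using assms(2) b(3) by (simp add: N_def)
      also have "(e + N) mod N = e"
        using b(1,2) dlog_less_and_pow_dlog(1)[of b] unfolding N_def[symmetric] by simp
      finally show ?thesis .
    qed
    ultimately show "e \<in> E"
      unfolding E_def by force
  qed
  moreover have "inj_on (dlog p g) {b \<in> {1..p - 1}. dlog_close p g k a b}"
    by (rule inj_on_subset[OF inj_on_dlog]) auto
  ultimately have "card {b \<in> {1..p - 1}. dlog_close p g k a b} \<le> card E"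
    by (intro card_inj_on_le) (auto simp: E_def)
  also have "\<dots> \<le> 2 ^ k + 2 ^ k"
    unfolding E_def
    by (intro order_trans[OF card_Un_le] add_mono) (metis card_image_le card_lessThan finite_lessThan)+
  finally show ?thesis
    by simp
qed

lemma sum_weight_kernel_sq_row_le:
  assumes "2 ^ k \<le> p - 1"
  shows "(\<Sum>b<2^n. (weight_kernel p g s k a b)\<^sup>2) \<le> (if a \<in> {1..p - 1} then 4 / 2 ^ k else 0)"
proof (cases "a \<in> {1..p - 1}")
  case True
  define c :: real where "c = (sqrt 2 / 2 ^ k)\<^sup>2"
  define S where "S = {b \<in> {1..p - 1}. dlog_close p g k a b}"
  have "(weight_kernel p g s k a b)\<^sup>2 \<le> (if b \<in> S then c else 0)" for b
  proof -
    have "(weight_kernel p g s k a b)\<^sup>2 \<le> c"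
      unfolding c_def by (metis abs_weight_kernel_le abs_ge_zero power2_abs power_mono)
    moreover have "weight_kernel p g s k a b = 0" if "b \<notin> S"
      using that by (auto simp: weight_kernel_def S_def)
    ultimately show ?thesis
      by auto
  qed
  then have "(\<Sum>b<2^n. (weight_kernel p g s k a b)\<^sup>2) \<le> (\<Sum>b<2^n. if b \<in> S then c else 0)"
    by (rule sum_mono)
  also have "\<dots> = real (card {b \<in> {..<2^n}. b \<in> S}) * c"
    by (rule sum_if_const) simp
  also have "\<dots> \<le> real (2 * 2 ^ k) * c"
  proof -
    have "card {b \<in> {..<2^n}. b \<in> S} \<le> card S"
      by (rule card_mono) (auto simp: S_def)
    also have "\<dots> \<le> 2 * 2 ^ k"
      using card_dlog_close_le True assms by (simp add: S_def)
    finally have "real (card {b \<in> {..<2^n}. b \<in> S}) \<le> real (2 * 2 ^ k)"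
      by (simp only: of_nat_le_iff)
    then show ?thesis
      by (rule mult_right_mono) (simp add: c_def)
  qed
  also have "\<dots> = 4 / 2 ^ k"
    by (simp add: c_def power_divide power2_eq_square)
  finally show ?thesis
    using True by simp
next
  case False
  then have "weight_kernel p g s k a b = 0" for b
    by (auto simp: weight_kernel_def)
  then show ?thesis
    using False by simp
qed

lemma sum_weight_kernel_sq_le:
  assumes "2 ^ k \<le> p - 1"
  shows "(\<Sum>a<2^n. \<Sum>b<2^n. (weight_kernel p g s k a b)\<^sup>2) \<le> 4 * real (p - 1) / 2 ^ k"
proof -
  have "(\<Sum>a<2^n. \<Sum>b<2^n. (weight_kernel p g s k a b)\<^sup>2)
      \<le> (\<Sum>a<2^n. if a \<in> {1..p - 1} then 4 / 2 ^ k else 0)"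
    by (intro sum_mono sum_weight_kernel_sq_row_le assms)
  also have "\<dots> = real (card {a \<in> {..<2^n}. a \<in> {1..p - 1}}) * (4 / 2 ^ k)"
    by (simp add: sum_if_const)
  also have "\<dots> \<le> real (p - 1) * (4 / 2 ^ k)"
  proof -
    have "card {a \<in> {..<2^n}. a \<in> {1..p - 1}} \<le> card {1..p - 1}"
      by (rule card_mono) auto
    then show ?thesis
      by (intro mult_right_mono) simp_all
  qed
  also have "\<dots> = 4 * real (p - 1) / 2 ^ k"
    by simp
  finally show ?thesis .
qed

lemma f_s_eq_cyc_offset:
  assumes "odd p" "x \<in> {1..p - 1}"
  shows "f_s p g s x = (if cyc_offset p g s x < int ((p - 1) div 2) then 1 else -1)"
proof -
  have "p \<ge> 3"
    using p_gt_1 assms(1) by (cases "p = 2") auto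
  then have half: "i \<le> (p - 3) div 2 \<longleftrightarrow> i < (p - 1) div 2" for i
    using assms(1) by presburger
  show ?thesis
    unfolding f_s_def half cyc_offset_def
    using mem_cyclic_interval_iff[OF dlog_less_and_pow_dlog(1)[OF assms(2)], of "(p - 1) div 2" s]
    by simp
qed

lemma cyc_offset_window:
  assumes "x \<in> {1..p - 1}"
  shows "cyc_offset p g s ((x * g ^ i) mod p) = (cyc_offset p g s x + int i) mod int (p - 1)"
proof -
  have "cyc_offset p g s ((x * g ^ i) mod p) = (int ((dlog p g x + i) mod (p - 1)) - int s) mod int (p - 1)"
    by (simp add: cyc_offset_def dlog_window[OF assms])
  also have "\<dots> = (int i + (int (dlog p g x) - int s)) mod int (p - 1)"
    by (simp add: zmod_int mod_diff_left_eq algebra_simps)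
  also have "\<dots> = (cyc_offset p g s x + int i) mod int (p - 1)"
    by (simp add: cyc_offset_def mod_add_right_eq add.commute)
  finally show ?thesis .
qed

lemma inj_on_cyc_offset: "inj_on (cyc_offset p g s) {1..p - 1}"
proof (rule inj_onI)
  fix x y assume xy: "x \<in> {1..p - 1}" "y \<in> {1..p - 1}" "cyc_offset p g s x = cyc_offset p g s y"
  then have "int (dlog p g x) mod int (p - 1) = int (dlog p g y) mod int (p - 1)"
    by (simp add: cyc_offset_def mod_eq_dvd_iff)
  then have "dlog p g x = dlog p g y"
    using dlog_less_and_pow_dlog(1) xy by simp
  then show "x = y"
    using inj_on_dlog xy by (auto dest: inj_onD)
qed

text \<open>The labels of a window \<open>x, x g, \<dots>\<close> can only change where its offsets cross one of the two
  ends of the arc of positive labels, so the window is monochromatic unless the offset of \<open>x\<close>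
  lies in one of two intervals of length \<open>2\<^sup>k - 1\<close> just before these ends.\<close>

lemma window_label_const:
  assumes "odd p" "x \<in> {1..p - 1}" "2 ^ k \<le> (p - 1) div 2" "i < 2 ^ k"
    and far: "cyc_offset p g s x \<notin> {int ((p - 1) div 2) - 2 ^ k + 1 ..< int ((p - 1) div 2)}
                                  \<union> {int (p - 1) - 2 ^ k + 1 ..< int (p - 1)}"
  shows "f_s p g s ((x * g ^ i) mod p) = f_s p g s x"
proof -
  let ?r = "cyc_offset p g s x" and ?h = "int ((p - 1) div 2)"
  have N: "int (p - 1) = 2 * ?h"
    using assms(1) p_gt_1 by (simp add: of_nat_diff) presburger
  have "0 \<le> ?r" "?r < 2 * ?h"
    using p_gt_1 N by (auto simp: cyc_offset_def simp del: of_nat_diff)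
  moreover have "0 \<le> int i" "int i < 2 ^ k" "2 ^ k \<le> ?h"
    using assms(3,4) by simp_all
  moreover have "?r \<notin> {?h - 2 ^ k + 1 ..< ?h} \<union> {2 * ?h - 2 ^ k + 1 ..< 2 * ?h}"
    using far N by simp
  ultimately have "(?r + int i) mod (2 * ?h) = ?r + int i" "(?r + int i < ?h) = (?r < ?h)"
    by (rule shift_stays_in_half)+
  then have "(if (?r + int i) mod int (p - 1) < ?h then 1 else -1) = (if ?r < ?h then 1 else (-1::real))"
    by (simp only: N)
  then show ?thesis
    by (simp only: f_s_eq_cyc_offset[OF assms(1) window_in_units[OF assms(2)]]
        f_s_eq_cyc_offset[OF assms(1,2)] cyc_offset_window[OF assms(2)])
qed

lemma card_nonconst_window_le:
  assumes "odd p" "2 ^ k \<le> (p - 1) div 2"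
  shows "card {x \<in> {1..p - 1}. \<not> (\<forall>i<2^k. f_s p g s ((x * g ^ i) mod p) = f_s p g s x)} \<le> 2 * 2 ^ k"
proof -
  define R :: "int set" where
    "R = {int ((p - 1) div 2) - 2 ^ k + 1 ..< int ((p - 1) div 2)} \<union> {int (p - 1) - 2 ^ k + 1 ..< int (p - 1)}"
  have "card {x \<in> {1..p - 1}. \<not> (\<forall>i<2^k. f_s p g s ((x * g ^ i) mod p) = f_s p g s x)} \<le> card R"
  proof (rule card_inj_on_le)
    show "inj_on (cyc_offset p g s) {x \<in> {1..p - 1}. \<not> (\<forall>i<2^k. f_s p g s ((x * g ^ i) mod p) = f_s p g s x)}"
      by (rule inj_on_subset[OF inj_on_cyc_offset]) auto
    show "cyc_offset p g s ` {x \<in> {1..p - 1}. \<not> (\<forall>i<2^k. f_s p g s ((x * g ^ i) mod p) = f_s p g s x)} \<subseteq> R"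
      using window_label_const[OF assms(1) _ assms(2)] unfolding R_def by blast
  qed (simp add: R_def)
  also have "card R \<le> nat (2 ^ k - 1) + nat (2 ^ k - 1)"
    unfolding R_def by (rule order_trans[OF card_Un_le]) simp
  also have "\<dots> \<le> 2 * 2 ^ k"
  proof -
    have "nat ((2::int) ^ k - 1) \<le> 2 ^ k"
      by (simp add: nat_le_iff)
    then show ?thesis
      by linarith
  qed
  finally show ?thesis .
qed

lemma exists_weight_vec:
  assumes "odd p" "2 ^ k \<le> (p - 1) div 2" "p \<le> 2 ^ n"
    and "4 * real (p - 1) / 2 ^ k \<le> C\<^sup>2" "0 \<le> C"
  obtains v where "vnorm (4 ^ n + 1) v = C"
    and "\<forall>x\<in>{1..p - 1}. \<bar>f_s p g s x * vinner (4 ^ n + 1) v (xtilde n p g k x)\<bar> \<le> 1"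
    and "prob_units p (\<lambda>x. 1 \<le> f_s p g s x * vinner (4 ^ n + 1) v (xtilde n p g k x))
           \<ge> 1 - 2 * 2 ^ k / real (p - 1)"
proof
  define Q where "Q = (\<Sum>a<2^n. \<Sum>b<2^n. (weight_kernel p g s k a b)\<^sup>2)"
  define v where "v = weight_vec n p g s k (sqrt (C\<^sup>2 - Q))"
  have "2 ^ k \<le> p - 1"
    using assms(2) div_le_dividend le_trans by blast
  then have "Q \<le> C\<^sup>2"
    using sum_weight_kernel_sq_le[of k s n] assms(4) unfolding Q_def by linarith
  then show "vnorm (4 ^ n + 1) v = C"
    using assms(5) unfolding v_def vnorm_weight_vec Q_def[symmetric] by simp
  show "\<forall>x\<in>{1..p - 1}. \<bar>f_s p g s x * vinner (4 ^ n + 1) v (xtilde n p g k x)\<bar> \<le> 1"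
    using abs_vinner_weight_vec_le_1[OF _ assms(3)] by (simp add: v_def abs_mult abs_f_s)
  have "\<forall>x\<in>{1..p - 1}. \<not> \<not> (\<forall>i<2^k. f_s p g s ((x * g ^ i) mod p) = f_s p g s x)
          \<longrightarrow> 1 \<le> f_s p g s x * vinner (4 ^ n + 1) v (xtilde n p g k x)"
    using vinner_weight_vec_homogeneous[OF _ assms(3)] by (simp add: v_def f_s_mult_self)
  from prob_units_ge[OF p_gt_1 this card_nonconst_window_le[OF assms(1,2)]]
  show "prob_units p (\<lambda>x. 1 \<le> f_s p g s x * vinner (4 ^ n + 1) v (xtilde n p g k x))
      \<ge> 1 - 2 * 2 ^ k / real (p - 1)"
    by simp
qed

end

section \<open>Normalising the margin\<close>

lemma vnorm_scale: "0 \<le> c \<Longrightarrow> vnorm d (\<lambda>i. c * v i) = c * vnorm d v"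
  by (simp add: vnorm_def power_mult_distrib sum_distrib_left[symmetric] real_sqrt_mult)

lemma vinner_scale: "vinner d (\<lambda>i. c * v i) u = c * vinner d v u"
  by (simp add: vinner_def sum_distrib_left mult.assoc)

lemma exists_unit_weight_vec:
  fixes y :: "nat \<Rightarrow> real" and X :: "nat \<Rightarrow> nat \<Rightarrow> real" and Pr :: "(nat \<Rightarrow> bool) \<Rightarrow> real"
  assumes "0 < C" "vnorm d v = C" "C \<le> B"
    and "\<forall>x\<in>S. \<bar>y x * vinner d v (X x)\<bar> \<le> 1"
    and "q \<le> Pr (\<lambda>x. 1 \<le> y x * vinner d v (X x))"
  shows "\<exists>w. vnorm d w = 1
          \<and> q \<le> Pr (\<lambda>x. 1 / C \<le> y x * vinner d w (X x))
          \<and> (\<forall>x\<in>S. \<bar>y x * vinner d w (X x)\<bar> \<le> 1 / C)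
          \<and> (let w' = (\<lambda>i. C * w i) in
               q \<le> Pr (\<lambda>x. 1 \<le> y x * vinner d w' (X x))
             \<and> (\<forall>x\<in>S. \<bar>y x * vinner d w' (X x)\<bar> \<le> 1)
             \<and> vnorm d w' = C
             \<and> vnorm d w' \<le> B)"
proof (intro exI conjI)
  define w where "w = (\<lambda>i. (1 / C) * v i)"
  have w': "(\<lambda>i. C * w i) = v"
    using assms(1) by (simp add: w_def)
  have margin: "y x * vinner d w (X x) = (y x * vinner d v (X x)) / C" for x
    unfolding w_def vinner_scale by simp
  have "0 \<le> 1 / C"
    using assms(1) by simp
  then show "vnorm d w = 1"
    using assms(1,2) unfolding w_def vnorm_scale[OF \<open>0 \<le> 1 / C\<close>] by simp
  have "(\<lambda>x. 1 / C \<le> y x * vinner d w (X x)) = (\<lambda>x. 1 \<le> y x * vinner d v (X x))"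
    using assms(1) by (simp add: margin divide_le_cancel)
  then show "q \<le> Pr (\<lambda>x. 1 / C \<le> y x * vinner d w (X x))"
    using assms(5) by simp
  show "\<forall>x\<in>S. \<bar>y x * vinner d w (X x)\<bar> \<le> 1 / C"
    using assms(1,4) by (simp add: margin abs_div divide_right_mono)
  show "let w' = (\<lambda>i. C * w i) in
          q \<le> Pr (\<lambda>x. 1 \<le> y x * vinner d w' (X x))
        \<and> (\<forall>x\<in>S. \<bar>y x * vinner d w' (X x)\<bar> \<le> 1)
        \<and> vnorm d w' = C \<and> vnorm d w' \<le> B"
    using assms by (simp add: w')
qed

lemma margin_constant_bounds:
  fixes K N \<Delta> :: real
  assumes "0 < K" "2 * K \<le> N" "\<Delta> = 2 * K / N"
  shows "4 * N / K \<le> (sqrt (8 + 2 * \<Delta>\<^sup>2) / \<Delta>)\<^sup>2"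
    and "0 < sqrt (8 + 2 * \<Delta>\<^sup>2) / \<Delta>"
    and "sqrt (8 + 2 * \<Delta>\<^sup>2) / \<Delta> \<le> sqrt 10 / \<Delta>"
proof -
  have "0 < N" "0 < \<Delta>" "\<Delta> \<le> 1"
    using assms by (auto simp: divide_le_eq)
  have "4 * N / K = 2 * N * (2 * K) / (K * K)"
    using assms(1) by (simp add: field_simps)
  also have "\<dots> \<le> 2 * N * N / (K * K)"
    using assms(1,2) \<open>0 < N\<close> by (intro divide_right_mono mult_left_mono) auto
  also have "\<dots> = 8 / \<Delta>\<^sup>2"
    using assms(1) \<open>0 < N\<close> by (simp add: assms(3) field_simps power2_eq_square)
  also have "\<dots> \<le> (8 + 2 * \<Delta>\<^sup>2) / \<Delta>\<^sup>2"
    by (intro divide_right_mono) auto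
  also have "\<dots> = (sqrt (8 + 2 * \<Delta>\<^sup>2) / \<Delta>)\<^sup>2"
    by (simp add: power_divide)
  finally show "4 * N / K \<le> (sqrt (8 + 2 * \<Delta>\<^sup>2) / \<Delta>)\<^sup>2" .
  show "0 < sqrt (8 + 2 * \<Delta>\<^sup>2) / \<Delta>"
    using \<open>0 < \<Delta>\<close> by (simp add: add_pos_nonneg)
  have "sqrt (8 + 2 * \<Delta>\<^sup>2) \<le> sqrt 10"
    using \<open>0 < \<Delta>\<close> \<open>\<Delta> \<le> 1\<close> by (simp add: power_le_one)
  then show "sqrt (8 + 2 * \<Delta>\<^sup>2) / \<Delta> \<le> sqrt 10 / \<Delta>"
    using \<open>0 < \<Delta>\<close> by (simp add: divide_right_mono)
qed

lemma le_two_pow_ceiling_log: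
  fixes p :: nat
  assumes "0 < p"
  shows "p \<le> 2 ^ nat \<lceil>log 2 (real p)\<rceil>"
proof -
  have "real p = 2 powr log 2 (real p)"
    using assms by simp
  also have "\<dots> \<le> 2 powr real (nat \<lceil>log 2 (real p)\<rceil>)"
    by (intro powr_mono) (auto intro: real_nat_ceiling_ge)
  also have "\<dots> = real (2 ^ nat \<lceil>log 2 (real p)\<rceil>)"
    by (simp add: powr_realpow)
  finally show ?thesis
    by (simp only: of_nat_le_iff)
qed

theorem lemmaD3:
  fixes p g s k n :: nat and \<Delta> :: real
  assumes "prime p" and "odd p"
    and "n = nat \<lceil>log 2 (real p)\<rceil>"
    and "residue_primroot p g"
    and "s \<in> {1..p - 1}"
    and "2 ^ k \<le> (p - 1) div 2"
    and "\<Delta> = 2 ^ (k + 1) / real (p - 1)"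
  shows
    "(\<forall>x \<in> {1..p - 1}. vnorm (4 ^ n + 1) (xtilde n p g k x) = 1)
     \<and> (\<exists>w. vnorm (4 ^ n + 1) w = 1
          \<and> prob_units p (\<lambda>x. f_s p g s x * vinner (4 ^ n + 1) w (xtilde n p g k x)
                               \<ge> \<Delta> / sqrt (8 + 2 * \<Delta>\<^sup>2)) \<ge> 1 - \<Delta>
          \<and> (\<forall>x \<in> {1..p - 1}. \<bar>f_s p g s x * vinner (4 ^ n + 1) w (xtilde n p g k x)\<bar>
                               \<le> \<Delta> / sqrt (8 + 2 * \<Delta>\<^sup>2))
          \<and> (let w' = (\<lambda>i. (sqrt (8 + 2 * \<Delta>\<^sup>2) / \<Delta>) * w i) in
               prob_units p (\<lambda>x. f_s p g s x * vinner (4 ^ n + 1) w' (xtilde n p g k x) \<ge> 1) \<ge> 1 - \<Delta>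
             \<and> (\<forall>x \<in> {1..p - 1}. \<bar>f_s p g s x * vinner (4 ^ n + 1) w' (xtilde n p g k x)\<bar> \<le> 1)
             \<and> vnorm (4 ^ n + 1) w' = sqrt (8 + 2 * \<Delta>\<^sup>2) / \<Delta>
             \<and> vnorm (4 ^ n + 1) w' \<le> sqrt 10 / \<Delta>))
     \<and> (\<forall>x \<in> {1..p - 1}. \<forall>x' \<in> {1..p - 1}.
          vinner (4 ^ n + 1) (xtilde n p g k x) (xtilde n p g k x')
            = (1 + (cmod (braket n p g k x x'))\<^sup>2) / 2)"
proof -
  interpret primroot_mod p g
    using assms(1,4) by unfold_locales
  have p_le: "p \<le> 2 ^ n" and window_le: "2 ^ k \<le> p - 1"
    using le_two_pow_ceiling_log[of p] p_gt_1 assms(3,6) by auto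
  have \<Delta>: "\<Delta> = 2 * 2 ^ k / real (p - 1)"
    using assms(7) by simp
  have "2 * 2 ^ k \<le> p - 1"
    using assms(6) by linarith
  then have K_pos: "(0::real) < 2 ^ k" and N_ge: "2 * 2 ^ k \<le> real (p - 1)"
    by (simp, metis of_nat_le_iff of_nat_mult of_nat_numeral of_nat_power)
  define C where "C = sqrt (8 + 2 * \<Delta>\<^sup>2) / \<Delta>"
  note C_bounds = margin_constant_bounds[OF K_pos N_ge \<Delta>, folded C_def]
  obtain v where v_norm: "vnorm (4 ^ n + 1) v = C"
    and v_margin: "\<forall>x\<in>{1..p - 1}. \<bar>f_s p g s x * vinner (4 ^ n + 1) v (xtilde n p g k x)\<bar> \<le> 1"
    and v_prob: "prob_units p (\<lambda>x. 1 \<le> f_s p g s x * vinner (4 ^ n + 1) v (xtilde n p g k x)) \<ge> 1 - \<Delta>"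
    using exists_weight_vec[OF assms(2,6) p_le C_bounds(1) less_imp_le[OF C_bounds(2)]]
    unfolding \<Delta> by blast
  have inv_C: "1 / C = \<Delta> / sqrt (8 + 2 * \<Delta>\<^sup>2)"
    by (simp add: C_def)
  show ?thesis
    using exists_unit_weight_vec[where y = "f_s p g s" and X = "xtilde n p g k" and Pr = "prob_units p",
        OF C_bounds(2) v_norm C_bounds(3) v_margin v_prob, unfolded inv_C, unfolded C_def]
      vnorm_xtilde[OF _ window_le p_le] vinner_xtilde_braket
    by blast
qed

end
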